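(* Let $A$ be an aperiodic binary sequence of length $n\ge 2$. Then every binary $k'$-stage machine that generates $A$ satisfies $k'\ge k$, where \[ k=\max\bigl(\lceil \log_2 wt(A)\rceil,\ \lceil \log_2 (n-wt(A))\rceil\bigr)+1 . \] Consequently (together with the existence of a generating binary $k$-stage machine) $k$ is exactly the minimum number of stages of a binary machine generating $A$.
   Context: A binary sequence of length $n$ is an $n$-tuple $A=(a_0,\ldots,a_{n-1})\in\{0,1\}^n$; its Hamming weight $wt(A)$ is the number of 1s. $A$ is called aperiodic if it is not of the form $B B\cdots B$ ($m\ge 2$ copies) for a shorter binary sequence $B$. A binary $k$-stage machine consists of $k$ stages $0,1,\ldots,k-1$, each holding one bit; its state is the vector $(x_{k-1},\ldots,x_1,x_0)\in\{0,1\}^k$. Each stage $j$ has its own arbitrary Boolean next-state function $f_j:\{0,1\}^k\to\{0,1\}$ (arbitrary feedback and feedforward dependencies allowed), and at each clock step the state $x$ is replaced by $(f_{k-1}(x),\ldots,f_0(x))$. The output at each time step is the content of stage $0$. The machine generates $A$ if for some initial state the output sequence is the periodic sequence $a_0,a_1,\ldots,a_{n-1},a_0,a_1,\ldots$. *)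

theory Defs
  imports Complex_Main
begin

text \<open>Binary sequences are lists of booleans (True = 1).\<close>

definition wt :: "bool list \<Rightarrow> nat" where
  "wt A = length (filter id A)"

definition aperiodic :: "bool list \<Rightarrow> bool" where
  "aperiodic A \<longleftrightarrow> \<not> (\<exists>B m. m \<ge> 2 \<and> A = concat (replicate m B))"

text \<open>A binary k-stage machine is given by next-state functions f j (j < k),
  each an arbitrary Boolean function of the whole state. A state is a bool list
  of length k whose j-th entry is the content of stage j.\<close>

definition mstep :: "nat \<Rightarrow> (nat \<Rightarrow> bool list \<Rightarrow> bool) \<Rightarrow> bool list \<Rightarrow> bool list" where
  "mstep k f x = map (\<lambda>j. f j x) [0..<k]"

definition generates :: "nat \<Rightarrow> (nat \<Rightarrow> bool list \<Rightarrow> bool) \<Rightarrow> bool list \<Rightarrow> bool" where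
  "generates k f A \<longleftrightarrow> 0 < k \<and> A \<noteq> [] \<and>
     (\<exists>s. length s = k \<and> (\<forall>t. ((mstep k f) ^^ t) s ! 0 = A ! (t mod length A)))"

end

theory Submission
  imports Defs
begin

text \<open>
  Let the machine start in state s and let x t be its state at time t.
  If two of the states x 0, ..., x (n-1) coincided, say x i = x j with i < j,
  then the state sequence, and hence the output, would be periodic with
  period d = j - i from time i on; since the output is A repeated, A would be
  invariant under the cyclic shift by d, hence by gcd d n, a proper divisor of n,
  and A would be a power of its prefix of that length, contradicting aperiodicity.
  So the n states are distinct. The times t < n with a_t = c are therefore mapped
  injectively into the states whose stage 0 holds c, of which there are 2^(k'-1).
  Taking c = 1 and c = 0 gives wt A \<le> 2^(k'-1) and n - wt A \<le> 2^(k'-1), and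
  taking logarithms yields the bound.
\<close>

definition cyclic_period :: "'a list \<Rightarrow> nat \<Rightarrow> bool" where
  "cyclic_period A d \<longleftrightarrow> (\<forall>t. A ! ((t + d) mod length A) = A ! (t mod length A))"

lemma cyclic_period_mult:
  assumes "cyclic_period A d"
  shows "cyclic_period A (d * q)"
  unfolding cyclic_period_def
proof
  fix t
  show "A ! ((t + d * q) mod length A) = A ! (t mod length A)"
  proof (induction q)
    case (Suc q)
    have "A ! ((t + d * Suc q) mod length A) = A ! ((t + d * q + d) mod length A)"
      by (simp add: algebra_simps)
    also have "\<dots> = A ! ((t + d * q) mod length A)"
      using assms unfolding cyclic_period_def by blast
    finally show ?case using Suc.IH by simp
  qed simp
qed

text \<open>By Bezout, the cyclic periods are closed under taking gcd with the length.\<close>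

lemma cyclic_period_gcd:
  assumes "cyclic_period A d" "d > 0"
  shows "cyclic_period A (gcd d (length A))"
  unfolding cyclic_period_def
proof
  fix t
  let ?n = "length A" and ?p = "gcd d (length A)"
  obtain a b where ab: "d * a = ?n * b + ?p"
    using bezout_nat[of d ?n] assms(2) by auto
  have "A ! ((t + ?p) mod ?n) = A ! ((t + ?p + ?n * b) mod ?n)" by simp
  also have "t + ?p + ?n * b = t + d * a" using ab by simp
  finally show "A ! ((t + ?p) mod ?n) = A ! (t mod ?n)"
    using cyclic_period_mult[OF assms(1)] unfolding cyclic_period_def by simp
qed

lemma concat_replicate_nth:
  assumes "length B = p"
  shows "i < m * p \<Longrightarrow> concat (replicate m B) ! i = B ! (i mod p)"
proof (induction m arbitrary: i)
  case (Suc m)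
  show ?case
  proof (cases "i < p")
    case True then show ?thesis using assms by (simp add: nth_append)
  next
    case False
    then have "concat (replicate m B) ! (i - p) = B ! ((i - p) mod p)"
      using Suc by simp
    moreover have "(i - p) mod p = i mod p" using False by (simp add: mod_if)
    ultimately show ?thesis using assms False by (simp add: nth_append)
  qed
qed simp

lemma cyclic_period_dvd_concat:
  assumes per: "cyclic_period A p" and "p > 0" "p dvd length A"
  shows "A = concat (replicate (length A div p) (take p A))"
proof (rule nth_equalityI)
  let ?n = "length A"
  have len: "?n div p * p = ?n" using assms by simp
  have "A = [] \<or> length (take p A) = p"
    using assms(3) dvd_imp_le[of p ?n] by (cases "A = []") simp_all
  then show "length A = length (concat (replicate (?n div p) (take p A)))"
    using len by (auto simp: length_concat sum_list_replicate)
  fix i assume i: "i < length A"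
  then have "p \<le> ?n" using assms by (auto intro: dvd_imp_le)
  have "concat (replicate (?n div p) (take p A)) ! i = A ! (i mod p)"
    using concat_replicate_nth[of "take p A" p i] \<open>p \<le> ?n\<close> assms(2) i len
    by (simp add: min_def)
  also have "\<dots> = A ! ((i mod p + p * (i div p)) mod ?n)"
    using cyclic_period_mult[OF per, of "i div p"] \<open>p \<le> ?n\<close> assms(2)
    unfolding cyclic_period_def
    by (metis mod_less mod_less_divisor order_less_le_trans)
  also have "\<dots> = A ! i" using i by simp
  finally show "A ! i = concat (replicate (?n div p) (take p A)) ! i" by simp
qed

lemma aperiodic_no_cyclic_period:
  assumes "aperiodic A" "0 < d" "d < length A"
  shows "\<not> cyclic_period A d"
proof
  assume per: "cyclic_period A d"
  let ?n = "length A" and ?p = "gcd d (length A)"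
  have p: "0 < ?p" "?p < ?n" "?p dvd ?n"
    using assms by (auto intro: le_less_trans[OF gcd_le1_nat])
  have "?n div ?p \<ge> 2"
  proof (rule ccontr)
    assume "\<not> ?n div ?p \<ge> 2"
    then have "?n div ?p \<le> 1" by simp
    then have "?n div ?p * ?p \<le> 1 * ?p" by (rule mult_le_mono1)
    then show False using p by simp
  qed
  moreover have "A = concat (replicate (?n div ?p) (take ?p A))"
    using cyclic_period_dvd_concat[OF cyclic_period_gcd[OF per assms(2)]] p by blast
  ultimately show False using assms(1) unfolding aperiodic_def by blast
qed

text \<open>For any deterministic system g whose output reproduces A periodically, the
  states visited during the first period are pairwise distinct: a repeated state
  would force a proper cyclic period of A.\<close>

lemma trajectory_inj_on_period:
  fixes g :: "'s \<Rightarrow> 's" and out :: "'s \<Rightarrow> bool"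
  assumes ap: "aperiodic A"
    and gen: "\<And>t. out ((g ^^ t) s) = A ! (t mod length A)"
  shows "inj_on (\<lambda>t. (g ^^ t) s) {..<length A}"
proof (rule ccontr)
  let ?n = "length A" and ?x = "\<lambda>t. (g ^^ t) s"
  assume "\<not> inj_on ?x {..<?n}"
  then obtain i j where ij: "i < j" "j < ?n" "?x i = ?x j"
    unfolding inj_on_def by (metis lessThan_iff nat_neq_iff)
  have eventually_periodic: "?x (t + (j - i)) = ?x t" if "i \<le> t" for t
  proof -
    have "t + (j - i) = (t - i) + j" "t = (t - i) + i" using ij that by simp_all
    then have "?x (t + (j - i)) = (g ^^ (t - i)) (?x j)" "?x t = (g ^^ (t - i)) (?x i)"
      by (metis comp_apply funpow_add)+
    then show ?thesis using ij by simp
  qed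
  have "cyclic_period A (j - i)"
    unfolding cyclic_period_def
  proof
    fix t
    have late: "i \<le> t + ?n * i" using ij by (cases "?n") auto
    have "A ! ((t + (j - i)) mod ?n) = out (?x (t + ?n * i + (j - i)))"
      using gen by (metis add.commute add.left_commute mod_mult_self2)
    also have "\<dots> = out (?x (t + ?n * i))" using eventually_periodic[OF late] by simp
    also have "\<dots> = A ! (t mod ?n)" using gen by simp
    finally show "A ! ((t + (j - i)) mod ?n) = A ! (t mod ?n)" .
  qed
  then show False using aperiodic_no_cyclic_period[OF ap] ij by simp
qed

lemma card_states_with_stage0:
  assumes "k > 0"
  shows "card {xs :: bool list. length xs = k \<and> xs ! 0 = c} = 2 ^ (k - 1)"
proof -
  have "{xs :: bool list. length xs = k \<and> xs ! 0 = c} = (#) c ` {ys. length ys = k - 1}"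
  proof (intro equalityI subsetI)
    fix xs assume "xs \<in> {xs :: bool list. length xs = k \<and> xs ! 0 = c}"
    then have "xs = c # tl xs" "length (tl xs) = k - 1" using assms by (cases xs; simp)+
    then show "xs \<in> (#) c ` {ys. length ys = k - 1}" by (metis (mono_tags) image_eqI mem_Collect_eq)
  qed (use assms in auto)
  moreover have "card {ys :: bool list. length ys = k - 1} = 2 ^ (k - 1)"
    using card_lists_length_eq[of "UNIV :: bool set" "k - 1"] by simp
  ultimately show ?thesis by (simp add: card_image)
qed

lemma mstep_funpow_length:
  "length s = k \<Longrightarrow> length ((mstep k f ^^ t) s) = k"
  by (induction t) (simp_all add: mstep_def)

text \<open>The number of positions holding c is at most the number of states holding c
  in stage 0, since the trajectory maps those positions injectively to such states.\<close>

lemma occurrences_le_states: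
  assumes ap: "aperiodic A" and gen: "generates k f A"
  shows "card {t. t < length A \<and> A ! t = c} \<le> 2 ^ (k - 1)"
proof -
  obtain s where s: "length s = k"
    and out: "\<And>t. (mstep k f ^^ t) s ! 0 = A ! (t mod length A)"
    using gen unfolding generates_def by blast
  let ?x = "\<lambda>t. (mstep k f ^^ t) s" and ?S = "{t. t < length A \<and> A ! t = c}"
  have "inj_on ?x ?S"
    using trajectory_inj_on_period[of A "\<lambda>x. x ! 0", OF ap out] by (rule inj_on_subset) auto
  moreover have "?x ` ?S \<subseteq> {xs. length xs = k \<and> xs ! 0 = c}"
    using out s by (auto simp: mstep_funpow_length)
  moreover have "finite {xs :: bool list. length xs = k \<and> xs ! 0 = c}"
    using finite_lists_length_eq[of "UNIV :: bool set" k] by (rule finite_subset[rotated]) auto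
  ultimately have "card ?S \<le> card {xs :: bool list. length xs = k \<and> xs ! 0 = c}"
    by (rule card_inj_on_le)
  then show ?thesis using card_states_with_stage0 gen unfolding generates_def by simp
qed

lemma wt_eq_card: "wt A = card {t. t < length A \<and> A ! t = True}"
  by (simp add: wt_def length_filter_conv_card)

lemma zeros_eq_card: "length A - wt A = card {t. t < length A \<and> A ! t = False}"
proof -
  have "length (filter id A) + length (filter (\<lambda>x. \<not> id x) A) = length A"
    by (rule sum_length_filter_compl)
  moreover have "length (filter (\<lambda>x. \<not> id x) A) = card {t. t < length A \<and> A ! t = False}"
    by (simp add: length_filter_conv_card)
  ultimately show ?thesis unfolding wt_def by linarith
qed

text \<open>w \<le> 2^(k-1) gives \<lceil>log 2 w\<rceil> \<le> k - 1 (with log 2 0 = 0 in Isabelle).\<close>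

lemma ceiling_log2_le:
  assumes "w \<le> (2::nat) ^ (k - 1)" "k > 0"
  shows "\<lceil>log 2 (real w)\<rceil> \<le> int k - 1"
proof (cases "w = 0")
  case True then show ?thesis using assms by (simp add: log_def)
next
  case False
  have "log 2 (real w) \<le> log 2 (2 ^ (k - 1))"
    using assms False by (subst log_le_cancel_iff) (auto simp flip: of_nat_power)
  also have "\<dots> = real (k - 1)" by (simp add: log_nat_power)
  finally have "\<lceil>log 2 (real w)\<rceil> \<le> int (k - 1)"
    by (simp add: ceiling_le_iff)
  then show ?thesis using assms by simp
qed

theorem theorem2:
  fixes A :: "bool list" and k' :: nat and f :: "nat \<Rightarrow> bool list \<Rightarrow> bool"
  assumes "length A \<ge> 2"
    and "aperiodic A"
    and "generates k' f A"
  shows "int k' \<ge> max \<lceil>log 2 (real (wt A))\<rceil> \<lceil>log 2 (real (length A - wt A))\<rceil> + 1"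
proof -
  have k'_pos: "k' > 0" using assms(3) unfolding generates_def by blast
  have "wt A \<le> 2 ^ (k' - 1)"
    using occurrences_le_states[OF assms(2,3), of True] by (simp add: wt_eq_card)
  moreover have "length A - wt A \<le> 2 ^ (k' - 1)"
    using occurrences_le_states[OF assms(2,3), of False] by (simp add: zeros_eq_card)
  ultimately have "\<lceil>log 2 (real (wt A))\<rceil> \<le> int k' - 1"
    and "\<lceil>log 2 (real (length A - wt A))\<rceil> \<le> int k' - 1"
    using ceiling_log2_le[OF _ k'_pos] by blast+
  then show ?thesis by simp
qed

end
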